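(* Let $0<t_1<t_2<t_3<t_4$ be real numbers and let $p_i=(t_i,t_i^2,t_i^3)\in\mathbb{R}^3$ for $1\le i\le 4$. Then the unique sphere in $\mathbb{R}^3$ passing through $p_1,\dots,p_4$ has the following property: for every $t\in(0,t_1)\cup(t_2,t_3)\cup(t_4,\infty)$, the point $(t,t^2,t^3)$ lies strictly outside the sphere, i.e., its distance from the center of the sphere is strictly greater than the radius.
   Context: The moment curve in $\mathbb{R}^d$ is the curve $t\mapsto(t,t^2,\dots,t^d)$ for $t>0$. *)

theory Defs
  imports "HOL-Analysis.Analysis"
begin

definition moment_curve3 :: "real \<Rightarrow> real ^ 3" where
  "moment_curve3 t = vector [t, t^2, t^3]"

end

(* The squared distance from a centre c to the curve point at t, minus the squared radius, is a
   monic polynomial of degree six in t.  For a sphere through the four given points it is therefore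
   (t - t1)(t - t2)(t - t3)(t - t4) Q(t) with a monic quadratic Q, whose coefficients turn out to be
   such that Q has no real root; so the point is outside exactly where the quartic factor is
   positive.  Two spheres through the points differ by a cubic in t with four roots, hence agree. *)
theory Submission
  imports Defs "HOL-Computational_Algebra.Polynomial"
begin

lemma dist_moment_curve3_sq:
  "(dist c (moment_curve3 t))^2
     = (c$1)^2 + (c$2)^2 + (c$3)^2 + t^2 + t^4 + t^6 - 2 * (c$1 * t + c$2 * t^2 + c$3 * t^3)"
proof -
  have "(dist c (moment_curve3 t))^2 = (c$1 - t)^2 + (c$2 - t^2)^2 + (c$3 - t^3)^2"
    unfolding dist_vec_def L2_set_def moment_curve3_def
    by (simp add: sum_3 vector_3 dist_real_def power2_abs)
  then show ?thesis
    by (simp add: algebra_simps power2_eq_square power3_eq_cube eval_nat_numeral)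
qed

lemma cubic_coeffs_eq_0:
  fixes a b c d :: "'a::idom"
  assumes "card A \<ge> 4" and "\<And>x. x \<in> A \<Longrightarrow> a + b*x + c*x^2 + d*x^3 = 0"
  shows "a = 0 \<and> b = 0 \<and> c = 0 \<and> d = 0"
proof -
  have "[:a, b, c, d:] = 0"
  proof (rule poly_eqI_degree)
    show "poly [:a, b, c, d:] x = poly 0 x" if "x \<in> A" for x
      using assms(2)[OF that] by (simp add: algebra_simps power2_eq_square power3_eq_cube)
    have "degree [:a, b, c, d:] \<le> 3"
      using degree_pCons_le[of a "[:b, c, d:]"] degree_pCons_le[of b "[:c, d:]"]
        degree_pCons_le[of c "[:d:]"] by simp
    then show "degree [:a, b, c, d:] < card A"
      using assms(1) by linarith
  qed (use assms(1) in simp)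
  then show ?thesis by (simp add: pCons_eq_0_iff)
qed

text \<open>The difference of the equations \<open>|x - c|\<^sup>2 - r\<^sup>2 = 0\<close> of two spheres is affine in \<open>x\<close>,
  so along the curve it is a cubic in the parameter.\<close>

lemma moment_curve3_sphere_unique:
  assumes "card T \<ge> 4"
    and "moment_curve3 ` T \<subseteq> sphere c r" "moment_curve3 ` T \<subseteq> sphere c' r'"
  shows "c = c' \<and> r = r'"
proof -
  define A where "A = ((c$1)^2 + (c$2)^2 + (c$3)^2 - r^2) - ((c'$1)^2 + (c'$2)^2 + (c'$3)^2 - r'^2)"
  have cubic: "A + (-2 * (c$1 - c'$1)) * t + (-2 * (c$2 - c'$2)) * t^2 + (-2 * (c$3 - c'$3)) * t^3 = 0"
    if "t \<in> T" for t
  proof -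
    have "(dist c (moment_curve3 t))^2 = r^2" "(dist c' (moment_curve3 t))^2 = r'^2"
      using assms(2,3) that by (auto simp: dist_commute)
    then show ?thesis
      unfolding A_def dist_moment_curve3_sq by (simp add: algebra_simps)
  qed
  have coeffs: "A = 0" "c$1 = c'$1" "c$2 = c'$2" "c$3 = c'$3"
    using cubic_coeffs_eq_0[OF assms(1) cubic] by simp_all
  then have "c = c'"
    by (simp add: vec_eq_iff forall_3)
  obtain t where "t \<in> T"
    using assms(1) by fastforce
  then have "r \<ge> 0" "r' \<ge> 0"
    using assms(2,3) by (auto dest!: subsetD[of _ _ "moment_curve3 t"])
  moreover have "r^2 = r'^2"
    using coeffs \<open>c = c'\<close> unfolding A_def by simp
  ultimately show ?thesis
    using \<open>c = c'\<close> by (simp add: power2_eq_iff_nonneg)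
qed

text \<open>The centre is found by matching coefficients in
  \<open>|c - (t, t\<^sup>2, t\<^sup>3)|\<^sup>2 - r\<^sup>2 = P(t) (t\<^sup>2 + \<alpha> t + \<beta>)\<close> for the monic quartic
  \<open>P(t) = t\<^sup>4 - e\<^sub>1 t\<^sup>3 + e\<^sub>2 t\<^sup>2 - e\<^sub>3 t + e\<^sub>4\<close>: the coefficients of \<open>t\<^sup>5\<close> and \<open>t\<^sup>4\<close>
  force \<open>\<alpha> = e\<^sub>1\<close> and \<open>\<beta> = 1 + e\<^sub>1\<^sup>2 - e\<^sub>2\<close>, those of \<open>t\<^sup>3, t\<^sup>2, t\<close> then give \<open>c\<close>.\<close>

definition moment_sphere_center :: "real \<Rightarrow> real \<Rightarrow> real \<Rightarrow> real \<Rightarrow> real ^ 3" where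
  "moment_sphere_center e1 e2 e3 e4 =
     (let b = 1 + e1^2 - e2
      in vector [(e3 * b - e1 * e4) / 2, (1 - e2 * b + e1 * e3 - e4) / 2, (e1 * b - e1 * e2 + e3) / 2])"

lemma dist_moment_sphere_center_sq_diff:
  fixes e1 e2 e3 e4 t u :: real
  defines "c \<equiv> moment_sphere_center e1 e2 e3 e4"
    and "P \<equiv> \<lambda>t. t^4 - e1 * t^3 + e2 * t^2 - e3 * t + e4"
    and "Q \<equiv> \<lambda>t. t^2 + e1 * t + 1 + e1^2 - e2"
  shows "(dist c (moment_curve3 t))^2 - (dist c (moment_curve3 u))^2 = P t * Q t - P u * Q u"
proof -
  have "x^2 + x^4 + x^6 - 2 * (c$1 * x + c$2 * x^2 + c$3 * x^3) = P x * Q x - e4 * (1 + e1^2 - e2)"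
    for x
    unfolding c_def P_def Q_def moment_sphere_center_def Let_def vector_3
    by (simp add: field_simps power2_eq_square power3_eq_cube eval_nat_numeral)
  from this[of t] this[of u] show ?thesis
    unfolding dist_moment_curve3_sq by linarith
qed

lemma moment_quadratic_pos:
  fixes e1 e2 t :: real
  assumes "2 * e2 \<le> e1^2"
  shows "t^2 + e1 * t + 1 + e1^2 - e2 > 0"
proof -
  have "t^2 + e1 * t + 1 + e1^2 - e2 = (t + e1 / 2)^2 + (e1^2 - 2 * e2) / 2 + e1^2 / 4 + 1"
    by (simp add: power2_eq_square field_simps)
  also have "\<dots> > 0"
    using assms by (simp add: add_nonneg_pos)
  finally show ?thesis .
qed

lemma moment_curve3_dist_sq_factorization:
  fixes t1 t2 t3 t4 :: real
  obtains c :: "real ^ 3" and Q :: "real \<Rightarrow> real"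
  where "\<And>t. (dist c (moment_curve3 t))^2 - (dist c (moment_curve3 t1))^2
               = (t - t1) * (t - t2) * (t - t3) * (t - t4) * Q t"
    and "\<And>t. Q t > 0"
proof -
  define e1 where "e1 = t1 + t2 + t3 + t4"
  define e2 where "e2 = t1 * t2 + t1 * t3 + t1 * t4 + t2 * t3 + t2 * t4 + t3 * t4"
  define e3 where "e3 = t1 * t2 * t3 + t1 * t2 * t4 + t1 * t3 * t4 + t2 * t3 * t4"
  define e4 where "e4 = t1 * t2 * t3 * t4"
  have vieta: "(t - t1) * (t - t2) * (t - t3) * (t - t4) = t^4 - e1 * t^3 + e2 * t^2 - e3 * t + e4"
    for t
    unfolding e1_def e2_def e3_def e4_def
    by (simp add: algebra_simps power2_eq_square power3_eq_cube eval_nat_numeral)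
  have "e1^2 - 2 * e2 = t1^2 + t2^2 + t3^2 + t4^2"
    unfolding e1_def e2_def by (simp add: algebra_simps power2_eq_square)
  then have "2 * e2 \<le> e1^2"
    by (smt (verit) zero_le_power2)
  define c where "c = moment_sphere_center e1 e2 e3 e4"
  define Q where "Q = (\<lambda>t::real. t^2 + e1 * t + 1 + e1^2 - e2)"
  show ?thesis
  proof (rule that)
    show "Q t > 0" for t
      unfolding Q_def using \<open>2 * e2 \<le> e1^2\<close> by (rule moment_quadratic_pos)
    show "(dist c (moment_curve3 t))^2 - (dist c (moment_curve3 t1))^2
            = (t - t1) * (t - t2) * (t - t3) * (t - t4) * Q t" for t
    proof -
      have "(dist c (moment_curve3 t))^2 - (dist c (moment_curve3 t1))^2
          = (t^4 - e1 * t^3 + e2 * t^2 - e3 * t + e4) * Q t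
            - (t1^4 - e1 * t1^3 + e2 * t1^2 - e3 * t1 + e4) * Q t1"
        unfolding c_def Q_def by (rule dist_moment_sphere_center_sq_diff)
      then show ?thesis
        by (simp only: vieta[symmetric]) simp
    qed
  qed
qed

lemma four_roots_product_pos:
  fixes t t1 t2 t3 t4 :: real
  assumes "t1 < t2" "t2 < t3" "t3 < t4" and "t < t1 \<or> t2 < t \<and> t < t3 \<or> t4 < t"
  shows "(t - t1) * (t - t2) * (t - t3) * (t - t4) > 0"
proof -
  have "(t - t1) * (t - t2) > 0" "(t - t3) * (t - t4) > 0"
    using assms by (auto intro: mult_pos_pos mult_neg_neg)
  then show ?thesis
    by (metis mult.assoc mult_pos_pos)
qed

lemma moment_curve3_sphere_through_four_points:
  fixes t1 t2 t3 t4 :: real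
  assumes "t1 < t2" "t2 < t3" "t3 < t4"
  obtains c r where "moment_curve3 ` {t1, t2, t3, t4} \<subseteq> sphere c r"
    and "\<And>t. t < t1 \<or> t2 < t \<and> t < t3 \<or> t4 < t \<Longrightarrow> dist c (moment_curve3 t) > r"
proof -
  obtain c Q
    where factor: "\<And>t. (dist c (moment_curve3 t))^2 - (dist c (moment_curve3 t1))^2
                       = (t - t1) * (t - t2) * (t - t3) * (t - t4) * Q t"
      and Q_pos: "\<And>t. Q t > 0"
    using moment_curve3_dist_sq_factorization[of t1 t2 t3 t4] by blast
  define r where "r = dist c (moment_curve3 t1)"
  show ?thesis
  proof (rule that)
    have "dist c (moment_curve3 t) = r" if "t \<in> {t1, t2, t3, t4}" for t
    proof -
      have "(dist c (moment_curve3 t))^2 = r^2"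
        using factor[of t] that unfolding r_def by auto
      then show ?thesis
        unfolding r_def by (simp add: power2_eq_iff_nonneg)
    qed
    then show "moment_curve3 ` {t1, t2, t3, t4} \<subseteq> sphere c r"
      by (auto simp: dist_commute)
    show "dist c (moment_curve3 t) > r" if "t < t1 \<or> t2 < t \<and> t < t3 \<or> t4 < t" for t
    proof -
      have "(t - t1) * (t - t2) * (t - t3) * (t - t4) * Q t > 0"
        using four_roots_product_pos[OF assms that] Q_pos by simp
      then have "r^2 < (dist c (moment_curve3 t))^2"
        using factor[of t] unfolding r_def by linarith
      then show ?thesis
        by (simp add: power2_less_imp_less)
    qed
  qed
qed

theorem mainTheorem7:
  fixes t1 t2 t3 t4 :: real
  assumes "0 < t1" "t1 < t2" "t2 < t3" "t3 < t4"
  shows "(\<exists>!(c, r). {moment_curve3 t1, moment_curve3 t2, moment_curve3 t3, moment_curve3 t4}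
              \<subseteq> sphere (c :: real ^ 3) (r :: real))
       \<and> (\<forall>c r. {moment_curve3 t1, moment_curve3 t2, moment_curve3 t3, moment_curve3 t4}
                  \<subseteq> sphere c r \<longrightarrow>
              (\<forall>t \<in> {0<..<t1} \<union> {t2<..<t3} \<union> {t4<..}. dist c (moment_curve3 t) > r))"
proof -
  let ?T = "{t1, t2, t3, t4}"
  obtain c0 r0 where on_sphere: "moment_curve3 ` ?T \<subseteq> sphere c0 r0"
    and outside: "\<And>t. t < t1 \<or> t2 < t \<and> t < t3 \<or> t4 < t \<Longrightarrow> dist c0 (moment_curve3 t) > r0"
    using moment_curve3_sphere_through_four_points[OF assms(2-4)] by blast
  have "card ?T \<ge> 4"
    using assms by simp
  then have unique: "c = c0 \<and> r = r0" if "moment_curve3 ` ?T \<subseteq> sphere c r" for c r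
    using moment_curve3_sphere_unique that on_sphere by blast
  have "\<exists>!(c, r). moment_curve3 ` ?T \<subseteq> sphere c r"
    using on_sphere unique by (intro ex1I[of _ "(c0, r0)"]) auto
  moreover have "dist c (moment_curve3 t) > r"
    if "moment_curve3 ` ?T \<subseteq> sphere c r" "t \<in> {0<..<t1} \<union> {t2<..<t3} \<union> {t4<..}" for c r t
    using unique[OF that(1)] outside that(2) by auto
  ultimately show ?thesis
    by simp
qed

end
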